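(* Let $(X,d)$ be a finite ultrametric space with $|X|\geqslant 2$ whose diametral graph $G_d$ is complete bipartite, $G_d=G[X_1,X_2]$. If $(X_i,d)\in\mathfrak U$ for $i=1,2$ and $\operatorname{Sp}(X_1)\cap\operatorname{Sp}(X_2)=\varnothing$, then $(X,d)\in\mathfrak U$.
   Context: $\operatorname{Sp}(X)=\{d(x,y):x,y\in X,\ x\neq y\}$ (empty for one-point spaces); $\operatorname{diam}X=\max d(x,y)$. $\mathfrak U$ is the class of finite ultrametric spaces $X$ with $|\operatorname{Sp}(X)|=|X|-1$. The diametral graph $G_d$ has vertex set $X$ and edges the pairs $\{u,v\}$ with $d(u,v)=\operatorname{diam}X$; $G[X_1,X_2]$ is the complete bipartite graph with parts $X_1,X_2$. $(X_i,d)$ denotes the subspace with the restricted metric. *)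

theory Defs
  imports Complex_Main
begin

definition ultrametric_on :: "'a set \<Rightarrow> ('a \<Rightarrow> 'a \<Rightarrow> real) \<Rightarrow> bool" where
  "ultrametric_on X d \<longleftrightarrow>
     (\<forall>x\<in>X. \<forall>y\<in>X. d x y \<ge> 0) \<and>
     (\<forall>x\<in>X. \<forall>y\<in>X. d x y = 0 \<longleftrightarrow> x = y) \<and>
     (\<forall>x\<in>X. \<forall>y\<in>X. d x y = d y x) \<and>
     (\<forall>x\<in>X. \<forall>y\<in>X. \<forall>z\<in>X. d x y \<le> max (d x z) (d z y))"

definition Sp :: "'a set \<Rightarrow> ('a \<Rightarrow> 'a \<Rightarrow> real) \<Rightarrow> real set" where
  "Sp X d = {d x y | x y. x \<in> X \<and> y \<in> X \<and> x \<noteq> y}"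

definition diam :: "'a set \<Rightarrow> ('a \<Rightarrow> 'a \<Rightarrow> real) \<Rightarrow> real" where
  "diam X d = Max {d x y | x y. x \<in> X \<and> y \<in> X}"

definition in_U :: "'a set \<Rightarrow> ('a \<Rightarrow> 'a \<Rightarrow> real) \<Rightarrow> bool" where
  "in_U X d \<longleftrightarrow> finite X \<and> X \<noteq> {} \<and> ultrametric_on X d \<and> card (Sp X d) = card X - 1"

definition diam_edge :: "'a set \<Rightarrow> ('a \<Rightarrow> 'a \<Rightarrow> real) \<Rightarrow> 'a \<Rightarrow> 'a \<Rightarrow> bool" where
  "diam_edge X d u v \<longleftrightarrow> u \<in> X \<and> v \<in> X \<and> u \<noteq> v \<and> d u v = diam X d"

definition diam_graph_complete_bipartite ::
  "'a set \<Rightarrow> ('a \<Rightarrow> 'a \<Rightarrow> real) \<Rightarrow> 'a set \<Rightarrow> 'a set \<Rightarrow> bool" where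
  "diam_graph_complete_bipartite X d X1 X2 \<longleftrightarrow>
     X1 \<noteq> {} \<and> X2 \<noteq> {} \<and> X1 \<inter> X2 = {} \<and> X1 \<union> X2 = X \<and>
     (\<forall>u v. diam_edge X d u v \<longleftrightarrow> (u \<in> X1 \<and> v \<in> X2) \<or> (u \<in> X2 \<and> v \<in> X1))"

end

theory Submission
  imports Defs
begin

text \<open>Every pair of points of X lies either inside one part or across the parts; the distances
  inside the parts form Sp(X1) and Sp(X2), and every cross distance equals diam X, which is not
  attained inside a part. So Sp(X) is the disjoint union of Sp(X1), Sp(X2) and {diam X}, and
  |Sp(X)| = (|X1| - 1) + (|X2| - 1) + 1 = |X| - 1.\<close>

lemma finite_Sp: "finite X \<Longrightarrow> finite (Sp X d)"
proof -
  assume "finite X"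
  have "Sp X d \<subseteq> (\<lambda>(x, y). d x y) ` (X \<times> X)" unfolding Sp_def by auto
  then show ?thesis using \<open>finite X\<close> by (simp add: finite_subset)
qed

lemma Sp_mono: "Y \<subseteq> X \<Longrightarrow> Sp Y d \<subseteq> Sp X d"
  unfolding Sp_def by blast

lemma diam_graph_complete_bipartite_swap:
  "diam_graph_complete_bipartite X d X1 X2 \<Longrightarrow> diam_graph_complete_bipartite X d X2 X1"
  unfolding diam_graph_complete_bipartite_def by blast

lemma diam_notin_Sp_part:
  assumes "diam_graph_complete_bipartite X d X1 X2"
  shows "diam X d \<notin> Sp X1 d"
proof
  assume "diam X d \<in> Sp X1 d"
  then obtain x y where "x \<in> X1" "y \<in> X1" "x \<noteq> y" "d x y = diam X d"
    unfolding Sp_def by auto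
  then have "diam_edge X d x y"
    using assms unfolding diam_graph_complete_bipartite_def diam_edge_def by blast
  then show False
    using assms \<open>x \<in> X1\<close> \<open>y \<in> X1\<close> unfolding diam_graph_complete_bipartite_def by blast
qed

lemma Sp_complete_bipartite:
  assumes "diam_graph_complete_bipartite X d X1 X2"
  shows "Sp X d = Sp X1 d \<union> Sp X2 d \<union> {diam X d}"
proof
  note bip = assms[unfolded diam_graph_complete_bipartite_def]
  show "Sp X d \<subseteq> Sp X1 d \<union> Sp X2 d \<union> {diam X d}"
  proof
    fix r assume "r \<in> Sp X d"
    then obtain x y where r: "r = d x y" "x \<in> X" "y \<in> X" "x \<noteq> y" unfolding Sp_def by auto
    show "r \<in> Sp X1 d \<union> Sp X2 d \<union> {diam X d}"
    proof (cases "(x \<in> X1 \<and> y \<in> X2) \<or> (x \<in> X2 \<and> y \<in> X1)")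
      case True
      then have "diam_edge X d x y" using bip by blast
      then show ?thesis using r unfolding diam_edge_def by simp
    next
      case False
      then have "(x \<in> X1 \<and> y \<in> X1) \<or> (x \<in> X2 \<and> y \<in> X2)" using bip r by blast
      then show ?thesis using r unfolding Sp_def by blast
    qed
  qed
  obtain a b where "a \<in> X1" "b \<in> X2" using bip by blast
  then have "diam_edge X d a b" using bip by blast
  then have "diam X d \<in> Sp X d" unfolding diam_edge_def Sp_def by force
  moreover have "X1 \<subseteq> X" "X2 \<subseteq> X" using bip by auto
  ultimately show "Sp X1 d \<union> Sp X2 d \<union> {diam X d} \<subseteq> Sp X d"
    using Sp_mono by blast
qed

lemma card_Sp_complete_bipartite:
  assumes "finite X" and bip: "diam_graph_complete_bipartite X d X1 X2"
    and "Sp X1 d \<inter> Sp X2 d = {}"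
  shows "card (Sp X d) = card (Sp X1 d) + card (Sp X2 d) + 1"
proof -
  have "X1 \<subseteq> X" "X2 \<subseteq> X" using bip unfolding diam_graph_complete_bipartite_def by auto
  then have "finite (Sp X1 d)" "finite (Sp X2 d)"
    using \<open>finite X\<close> finite_subset finite_Sp by blast+
  moreover have "diam X d \<notin> Sp X1 d" "diam X d \<notin> Sp X2 d"
    using diam_notin_Sp_part bip diam_graph_complete_bipartite_swap by blast+
  ultimately show ?thesis
    using Sp_complete_bipartite[OF bip] assms(3) by (simp add: card_Un_disjoint)
qed

lemma card_complete_bipartite:
  assumes "finite X" and "diam_graph_complete_bipartite X d X1 X2"
  shows "card X = card X1 + card X2"
  using assms unfolding diam_graph_complete_bipartite_def
  by (metis card_Un_disjoint finite_Un)

theorem corollary15: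
  fixes X X1 X2 :: "'a set" and d :: "'a \<Rightarrow> 'a \<Rightarrow> real"
  assumes "finite X" and "card X \<ge> 2"
    and "ultrametric_on X d"
    and "diam_graph_complete_bipartite X d X1 X2"
    and "in_U X1 d" and "in_U X2 d"
    and "Sp X1 d \<inter> Sp X2 d = {}"
  shows "in_U X d"
proof -
  have "card X1 \<ge> 1" "card X2 \<ge> 1"
    using assms(5,6) unfolding in_U_def by (auto simp: Suc_le_eq card_gt_0_iff)
  have "card (Sp X d) = card (Sp X1 d) + card (Sp X2 d) + 1"
    using card_Sp_complete_bipartite assms(1,4,7) by blast
  also have "\<dots> = (card X1 - 1) + (card X2 - 1) + 1"
    using assms(5,6) unfolding in_U_def by simp
  also have "\<dots> = card X - 1"
    using card_complete_bipartite[OF assms(1,4)] \<open>card X1 \<ge> 1\<close> \<open>card X2 \<ge> 1\<close> by simp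
  finally show ?thesis
    using assms(1-3) unfolding in_U_def by auto
qed

end
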